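(* For $n\geq1$, $\sum_{\pi\in\mathfrak{S}_n}x^{\mathrm{cpk}(\pi)}(-1)^{n-\mathrm{cyc}(\pi)}=(1-x)^{\lfloor n/2\rfloor}$.
   Context: For $\pi\in\mathfrak{S}_n$, $\mathrm{cyc}(\pi)$ is the number of cycles and a cycle peak is an $i\in[n]$ with $\pi^{-1}(i)<i>\pi(i)$; $\mathrm{cpk}(\pi)$ is the number of cycle peaks. *)

theory Defs
  imports "HOL-Combinatorics.Combinatorics" "HOL-Computational_Algebra.Polynomial"
begin

definition perm_cycle :: "(nat \<Rightarrow> nat) \<Rightarrow> nat \<Rightarrow> nat set" where
  "perm_cycle p i = {(p ^^ k) i | k. True}"

definition cyc :: "nat \<Rightarrow> (nat \<Rightarrow> nat) \<Rightarrow> nat" where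
  "cyc n p = card (perm_cycle p ` {1..n})"

definition cpk :: "nat \<Rightarrow> (nat \<Rightarrow> nat) \<Rightarrow> nat" where
  "cpk n p = card {i \<in> {1..n}. inv p i < i \<and> p i < i}"

end

(* Every permutation of {1..k+1} arises uniquely from a permutation q of {1..k}, either by adding
   k+1 as a fixed point or by inserting k+1 into a cycle of q just before some b, which gives
   transpose (k+1) b \<circ> q.  The first operation adds a cycle and keeps the cycle peaks.  The second
   keeps the number of cycles, so it flips the sign; k+1 becomes a peak, and b and its predecessor,
   at most one of which was a peak, stop being peaks.  Summing over b, the insertions into q with
   c peaks contribute (1 - kx - 2c(1 - x)) times the weight of q.  Since x times the derivative
   of x^c is c x^c, this is the recurrence F(k+1) = (1 - kx) F(k) - 2x(1 - x) F(k)', and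
   (1 - x)^(k div 2) solves it. *)

theory Submission
  imports Defs
begin

section \<open>Cycles as orbits\<close>

lemma perm_cycle_eq_orbit: "permutation p \<Longrightarrow> perm_cycle p x = orbit p x"
  by (simp add: perm_cycle_def orbit_altdef_permutation)

lemma cyc_eq_card_orbits: "p permutes {1..n} \<Longrightarrow> cyc n p = card (orbit p ` {1..n})"
  unfolding cyc_def
  by (metis (no_types) finite_atLeastAtMost image_cong perm_cycle_eq_orbit permutes_imp_permutation)

lemma orbit_subset_closed:
  assumes "x \<in> A" and "\<And>y. y \<in> A \<Longrightarrow> f y \<in> A"
  shows "orbit f x \<subseteq> A"
proof
  fix y assume "y \<in> orbit f x"
  then show "y \<in> A" by induction (use assms in auto)
qed

lemma orbit_eq_if_mem_orbit: "permutation f \<Longrightarrow> y \<in> orbit f x \<Longrightarrow> orbit f y = orbit f x"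
  by (meson cyclic_on_orbit' orbit_cyclic_eq3)

lemma card_orbits_insert_fixpoint:
  assumes "finite S" and "q permutes S" and "n \<notin> S"
  shows "card (orbit q ` insert n S) = Suc (card (orbit q ` S))"
proof -
  have "orbit q n = {n}"
    using permutes_not_in[OF assms(2,3)] by (simp add: orbit_eq_singleton_iff)
  moreover have "{n} \<notin> orbit q ` S"
    using permutes_orbit_subset[OF assms(2)] assms(3) by blast
  ultimately show ?thesis using assms(1) by simp
qed

text \<open>The hypotheses say that \<open>q'\<close> arises from \<open>q\<close> by moving its fixed point \<open>n\<close> into the cycle
  of \<open>j\<close>, right after \<open>j\<close>.\<close>

lemma orbit_insert_after:
  assumes q: "permutation q" and q': "permutation q'" and "q n = n"
    and q'_j: "q' j = n" and q'_n: "q' n = q j"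
    and q'_other: "\<And>y. y \<noteq> j \<Longrightarrow> y \<noteq> n \<Longrightarrow> q' y = q y"
    and "i \<noteq> n"
  shows "orbit q' i = (if j \<in> orbit q i then insert n (orbit q i) else orbit q i)"
proof -
  define C where "C = orbit q i"
  have i_C: "i \<in> C" unfolding C_def using q by (rule permutation_self_in_orbit)
  have n_C: "n \<notin> C"
  proof
    assume "n \<in> C"
    then have "C = {n}"
      using orbit_eq_if_mem_orbit[OF q] \<open>q n = n\<close> unfolding C_def
      by (metis orbit_eq_singleton_iff)
    with i_C \<open>i \<noteq> n\<close> show False by simp
  qed
  have "orbit q' i \<subseteq> (if j \<in> C then insert n C else C)"
  proof (rule orbit_subset_closed)
    fix y assume y: "y \<in> (if j \<in> C then insert n C else C)"
    have q_C: "q y \<in> C" if "y \<in> C" for y using that unfolding C_def by (rule orbit.step)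
    consider "y = n" | "y \<noteq> n" "y = j" | "y \<noteq> n" "y \<noteq> j" by blast
    then show "q' y \<in> (if j \<in> C then insert n C else C)"
    proof cases
      case 1
      with y n_C have "j \<in> C" by (auto split: if_splits)
      with 1 q'_n q_C show ?thesis by simp
    next
      case 2
      with y have "j \<in> C" by (auto split: if_splits)
      with 2 q'_j show ?thesis by simp
    next
      case 3
      with y q_C q'_other show ?thesis by (auto split: if_splits)
    qed
  qed (use i_C in simp)
  moreover have "C \<subseteq> orbit q' i"
    unfolding C_def
  proof (rule orbit_subset_closed)
    show "i \<in> orbit q' i" using q' by (rule permutation_self_in_orbit)
    fix y assume y: "y \<in> orbit q' i"
    consider "y = n" | "y \<noteq> n" "y = j" | "y \<noteq> n" "y \<noteq> j" by blast
    then show "q y \<in> orbit q' i"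
    proof cases
      case 1
      with y \<open>q n = n\<close> show ?thesis by simp
    next
      case 2
      have "q' (q' y) \<in> orbit q' i" using y by (intro orbit.step)
      with 2 q'_j q'_n show ?thesis by simp
    next
      case 3
      with orbit.step[OF y] q'_other show ?thesis by simp
    qed
  qed
  moreover have "n \<in> orbit q' i" if "j \<in> C"
  proof -
    have "j \<in> orbit q' i" using that \<open>C \<subseteq> orbit q' i\<close> by blast
    then show ?thesis using q'_j by (metis orbit.step)
  qed
  ultimately show ?thesis unfolding C_def[symmetric] by auto
qed

lemma card_orbits_insert_after:
  assumes "finite S" and q: "q permutes S" and q': "q' permutes insert n S"
    and "n \<notin> S" and "j \<in> S" and q'_j: "q' j = n" and q'_n: "q' n = q j"
    and q'_other: "\<And>y. y \<noteq> j \<Longrightarrow> y \<noteq> n \<Longrightarrow> q' y = q y"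
  shows "card (orbit q' ` insert n S) = card (orbit q ` S)"
proof -
  define extend where "extend C = (if j \<in> C then insert n C else C)" for C
  have perm_q: "permutation q" using permutes_imp_permutation[OF \<open>finite S\<close> q] .
  have perm_q': "permutation q'" using permutes_imp_permutation[OF _ q'] \<open>finite S\<close> by simp
  have q_n: "q n = n" using permutes_not_in[OF q \<open>n \<notin> S\<close>] .
  have "orbit q' n = orbit q' j"
    using orbit_eq_if_mem_orbit[OF perm_q'] orbit.base[of q' j] q'_j by simp
  then have "orbit q' ` insert n S = orbit q' ` S" using \<open>j \<in> S\<close> by auto
  also have "\<dots> = extend ` orbit q ` S"
  proof -
    have "orbit q' i = extend (orbit q i)" if "i \<in> S" for i
    proof -
      have "i \<noteq> n" using that \<open>n \<notin> S\<close> by blast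
      with perm_q perm_q' q_n q'_j q'_n q'_other show ?thesis
        unfolding extend_def by (rule orbit_insert_after)
    qed
    then show ?thesis by (simp add: image_image)
  qed
  also have "card \<dots> = card (orbit q ` S)"
  proof (rule card_image, rule inj_on_inverseI)
    fix C assume "C \<in> orbit q ` S"
    then have "n \<notin> C" using permutes_orbit_subset[OF q] \<open>n \<notin> S\<close> by blast
    then show "extend C - {n} = C" unfolding extend_def by simp
  qed
  finally show ?thesis .
qed

section \<open>Inserting a new maximum into a cycle\<close>

lemma transpose_comp_apply:
  assumes q: "q permutes S" and "n \<notin> S" and "b \<in> S"
  shows "(transpose n b \<circ> q) n = b"
    and "(transpose n b \<circ> q) (inv q b) = n"
    and "\<And>y. y \<noteq> inv q b \<Longrightarrow> y \<noteq> n \<Longrightarrow> (transpose n b \<circ> q) y = q y"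
proof -
  have q_n: "q n = n" using permutes_not_in[OF q \<open>n \<notin> S\<close>] .
  then show "(transpose n b \<circ> q) n = b" by simp
  show "(transpose n b \<circ> q) (inv q b) = n" by (simp add: permutes_inverses(1)[OF q])
  fix y assume "y \<noteq> inv q b" "y \<noteq> n"
  then have "q y \<noteq> n" "q y \<noteq> b"
    using q_n permutes_inverses(2)[OF q, of y] permutes_inj[OF q] by (metis injD)+
  then show "(transpose n b \<circ> q) y = q y" by simp
qed

lemma inv_transpose_comp:
  "q permutes S \<Longrightarrow> inv (transpose n b \<circ> q) = inv q \<circ> transpose n b"
  by (simp add: o_inv_distrib permutes_bij)

definition cycle_peaks :: "(nat \<Rightarrow> nat) \<Rightarrow> nat set \<Rightarrow> nat set" where
  "cycle_peaks p S = {i \<in> S. inv p i < i \<and> p i < i}"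

lemma cpk_eq_card_cycle_peaks: "cpk n p = card (cycle_peaks p {1..n})"
  by (simp add: cpk_def cycle_peaks_def)

lemma cycle_peaks_insert_fixpoint:
  assumes "q permutes {1..k}"
  shows "cycle_peaks q {1..Suc k} = cycle_peaks q {1..k}"
  using permutes_not_in[OF assms, of "Suc k"] by (auto simp: cycle_peaks_def le_Suc_eq)

text \<open>The new maximum \<open>Suc k\<close> becomes a peak, while its neighbours \<open>b\<close> and \<open>inv q b\<close> are
  below it and so lose their peak status.\<close>

lemma cycle_peaks_insert_after:
  assumes q: "q permutes {1..k}" and b: "b \<in> {1..k}"
  shows "cycle_peaks (transpose (Suc k) b \<circ> q) {1..Suc k}
       = insert (Suc k) (cycle_peaks q {1..k} - {b, inv q b})"
proof -
  define q' where "q' = transpose (Suc k) b \<circ> q"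
  have "Suc k \<notin> {1..k}" by simp
  note q'_apply = transpose_comp_apply[OF q this b, folded q'_def]
  have inv_q': "inv q' i = inv q (transpose (Suc k) b i)" for i
    by (simp add: q'_def inv_transpose_comp[OF q])
  have inv_q_n: "inv q (Suc k) = Suc k"
    using permutes_not_in[OF permutes_inv[OF q]] by simp
  have j: "inv q b \<in> {1..k}" using permutes_in_image[OF permutes_inv[OF q]] b by simp
  have "i \<in> cycle_peaks q' {1..Suc k} \<longleftrightarrow> i \<in> insert (Suc k) (cycle_peaks q {1..k} - {b, inv q b})"
    for i
  proof -
    consider "i = Suc k" | "i \<noteq> Suc k" "i = b" | "i \<noteq> Suc k" "i \<noteq> b" "i = inv q b"
      | "i \<noteq> Suc k" "i \<noteq> b" "i \<noteq> inv q b" by blast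
    then show ?thesis
    proof cases
      case 1
      with q'_apply(1) inv_q' j b show ?thesis by (simp add: cycle_peaks_def)
    next
      case 2
      with inv_q' inv_q_n show ?thesis by (simp add: cycle_peaks_def)
    next
      case 3
      with q'_apply(2) show ?thesis by (simp add: cycle_peaks_def)
    next
      case 4
      with q'_apply(3) inv_q' show ?thesis by (auto simp: cycle_peaks_def le_Suc_eq)
    qed
  qed
  then show ?thesis unfolding q'_def by blast
qed

section \<open>The signed peak polynomial\<close>

definition cpk_cyc_weight :: "nat \<Rightarrow> (nat \<Rightarrow> nat) \<Rightarrow> int poly" where
  "cpk_cyc_weight n p = [:0, 1:] ^ cpk n p * (-1) ^ (n - cyc n p)"

definition cpk_cyc_poly :: "nat \<Rightarrow> int poly" where
  "cpk_cyc_poly n = (\<Sum>p \<in> {p. p permutes {1..n}}. cpk_cyc_weight n p)"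

lemma cyc_le: "cyc n p \<le> n"
  unfolding cyc_def using card_image_le[of "{1..n}" "perm_cycle p"] by simp

lemma cpk_cyc_weight_insert_fixpoint:
  assumes "q permutes {1..k}"
  shows "cpk_cyc_weight (Suc k) q = cpk_cyc_weight k q"
proof -
  have "{1..Suc k} = insert (Suc k) {1..k}" by auto
  then have "cyc (Suc k) q = Suc (cyc k q)"
    using assms card_orbits_insert_fixpoint[OF _ assms, of "Suc k"]
      cyc_eq_card_orbits[OF assms] cyc_eq_card_orbits[OF permutes_subset[OF assms]]
    by simp
  then show ?thesis
    using cycle_peaks_insert_fixpoint[OF assms]
    by (simp add: cpk_cyc_weight_def cpk_eq_card_cycle_peaks)
qed

lemma cpk_cyc_weight_insert_after:
  assumes q: "q permutes {1..k}" and b: "b \<in> {1..k}"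
  shows "cpk_cyc_weight (Suc k) (transpose (Suc k) b \<circ> q)
       = - ([:0, 1:] ^ card (insert (Suc k) (cycle_peaks q {1..k} - {b, inv q b}))
            * (-1) ^ (k - cyc k q))"
proof -
  define q' where "q' = transpose (Suc k) b \<circ> q"
  have S: "{1..Suc k} = insert (Suc k) {1..k}" by auto
  have "Suc k \<notin> {1..k}" by simp
  note q'_apply = transpose_comp_apply[OF q this b, folded q'_def]
  have perm_q': "q' permutes {1..Suc k}"
    unfolding S q'_def using b
    by (intro permutes_compose[OF permutes_subset[OF q]] permutes_swap_id) auto
  have "inv q b \<in> {1..k}" using permutes_in_image[OF permutes_inv[OF q]] b by simp
  then have "card (orbit q' ` insert (Suc k) {1..k}) = card (orbit q ` {1..k})"
    using q'_apply permutes_inverses(1)[OF q]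
    by (intro card_orbits_insert_after[OF _ q perm_q'[unfolded S]]) auto
  then have "cyc (Suc k) q' = cyc k q"
    unfolding cyc_eq_card_orbits[OF q] cyc_eq_card_orbits[OF perm_q'] S .
  then have sign: "Suc k - cyc (Suc k) q' = Suc (k - cyc k q)" using cyc_le[of k q] by simp
  have peaks: "cycle_peaks q' {1..Suc k} = insert (Suc k) (cycle_peaks q {1..k} - {b, inv q b})"
    unfolding q'_def by (rule cycle_peaks_insert_after[OF q b])
  show ?thesis
    unfolding q'_def[symmetric] cpk_cyc_weight_def cpk_eq_card_cycle_peaks peaks sign by simp
qed

lemma power_card_insert_Diff_pair:
  fixes X :: "'a :: comm_ring_1"
  assumes "finite P" and "n \<notin> P" and "\<not> (b \<in> P \<and> j \<in> P)"
  shows "X ^ card (insert n (P - {b, j}))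
       = X ^ Suc (card P) + (of_bool (b \<in> P) + of_bool (j \<in> P)) * (X ^ card P - X ^ Suc (card P))"
proof -
  have card_insert: "card (insert n (P - {b, j})) = Suc (card (P - {b, j}))"
    using assms(1,2) by simp
  consider "b \<in> P" "j \<notin> P" | "b \<notin> P" "j \<in> P" | "b \<notin> P" "j \<notin> P"
    using assms(3) by blast
  then show ?thesis
  proof cases
    case 1
    then have "P - {b, j} = P - {b}" by blast
    then have "Suc (card (P - {b, j})) = card P"
      using card_Suc_Diff1[OF assms(1) 1(1)] by (simp only:)
    with 1 card_insert show ?thesis by simp
  next
    case 2
    then have "P - {b, j} = P - {j}" by blast
    then have "Suc (card (P - {b, j})) = card P"
      using card_Suc_Diff1[OF assms(1) 2(2)] by (simp only:)
    with 2 card_insert show ?thesis by simp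
  next
    case 3
    then have "P - {b, j} = P" by blast
    with 3 card_insert show ?thesis by simp
  qed
qed

lemma sum_power_card_insert_Diff_pair:
  fixes X :: "'a :: comm_ring_1"
  assumes "finite S" and g: "g permutes S" and "P \<subseteq> S" and "n \<notin> P"
    and not_both: "\<And>b. b \<in> P \<Longrightarrow> g b \<notin> P"
  shows "(\<Sum>b\<in>S. X ^ card (insert n (P - {b, g b})))
       = of_nat (card S) * X ^ Suc (card P) + of_nat (2 * card P) * (X ^ card P - X ^ Suc (card P))"
proof -
  have finite_P: "finite P" using assms(1,3) by (rule finite_subset[rotated])
  have count: "(\<Sum>b\<in>S. of_bool (b \<in> P)) = (of_nat (card P) :: 'a)"
    using assms(1,3) by (simp add: Int_absorb1)
  have "(\<Sum>b\<in>S. of_bool (g b \<in> P)) = (\<Sum>b\<in>S. (of_bool (b \<in> P) :: 'a))"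
    by (rule sum.reindex_bij_betw[OF permutes_imp_bij[OF g]])
  with count have count_g: "(\<Sum>b\<in>S. of_bool (g b \<in> P)) = (of_nat (card P) :: 'a)" by simp
  have "(\<Sum>b\<in>S. X ^ card (insert n (P - {b, g b})))
      = (\<Sum>b\<in>S. X ^ Suc (card P)
          + (of_bool (b \<in> P) + of_bool (g b \<in> P)) * (X ^ card P - X ^ Suc (card P)))"
    by (rule sum.cong[OF refl], rule power_card_insert_Diff_pair[OF finite_P \<open>n \<notin> P\<close>])
      (use not_both in blast)
  also have "\<dots> = of_nat (card S) * X ^ Suc (card P)
      + ((\<Sum>b\<in>S. of_bool (b \<in> P)) + (\<Sum>b\<in>S. of_bool (g b \<in> P))) * (X ^ card P - X ^ Suc (card P))"
    by (simp add: sum.distrib sum_distrib_right distrib_right)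
  finally show ?thesis by (simp add: count count_g)
qed

lemma cpk_cyc_weight_insertions:
  assumes q: "q permutes {1..k}"
  shows "cpk_cyc_weight (Suc k) q + (\<Sum>b\<in>{1..k}. cpk_cyc_weight (Suc k) (transpose (Suc k) b \<circ> q))
       = (1 - of_nat k * [:0, 1:] - 2 * of_nat (cpk k q) * (1 - [:0, 1:])) * cpk_cyc_weight k q"
proof -
  define X :: "int poly" where "X = [:0, 1:]"
  define P where "P = cycle_peaks q {1..k}"
  define s :: "int poly" where "s = (-1) ^ (k - cyc k q)"
  have not_both: "b \<in> P \<Longrightarrow> inv q b \<notin> P" for b
    using permutes_inverses(1)[OF q] by (auto simp: P_def cycle_peaks_def)
  have "P \<subseteq> {1..k}" "Suc k \<notin> P" by (auto simp: P_def cycle_peaks_def)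
  from sum_power_card_insert_Diff_pair[OF _ permutes_inv[OF q] this not_both, of X]
  have peak_sum: "(\<Sum>b\<in>{1..k}. X ^ card (insert (Suc k) (P - {b, inv q b})))
      = of_nat k * X ^ Suc (card P) + of_nat (2 * card P) * (X ^ card P - X ^ Suc (card P))"
    by simp
  have "(\<Sum>b\<in>{1..k}. cpk_cyc_weight (Suc k) (transpose (Suc k) b \<circ> q))
      = (\<Sum>b\<in>{1..k}. - s * X ^ card (insert (Suc k) (P - {b, inv q b})))"
    by (rule sum.cong[OF refl]) (simp add: cpk_cyc_weight_insert_after[OF q] X_def P_def s_def)
  also have "\<dots> = - s * (\<Sum>b\<in>{1..k}. X ^ card (insert (Suc k) (P - {b, inv q b})))"
    by (rule sum_distrib_left[symmetric])
  finally have "(\<Sum>b\<in>{1..k}. cpk_cyc_weight (Suc k) (transpose (Suc k) b \<circ> q))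
      = - s * (of_nat k * X ^ Suc (card P) + of_nat (2 * card P) * (X ^ card P - X ^ Suc (card P)))"
    unfolding peak_sum .
  moreover have "cpk_cyc_weight k q = X ^ card P * s"
    by (simp add: cpk_cyc_weight_def cpk_eq_card_cycle_peaks X_def P_def s_def)
  ultimately show ?thesis
    unfolding cpk_cyc_weight_insert_fixpoint[OF q] X_def[symmetric] cpk_eq_card_cycle_peaks P_def[symmetric]
    by (simp add: algebra_simps)
qed

lemma mult_pderiv_power: "p * pderiv (p ^ m) = smult (of_nat m) (pderiv p * p ^ m)"
proof (cases m)
  case (Suc k)
  then show ?thesis by (simp only: pderiv_power_Suc) (simp add: mult_ac)
qed simp

lemma X_mult_pderiv_cpk_cyc_weight:
  "[:0, 1:] * pderiv (cpk_cyc_weight n p) = of_nat (cpk n p) * cpk_cyc_weight n p"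
proof -
  define X :: "int poly" where "X = [:0, 1:]"
  define c where "c = cpk n p"
  define s :: "int poly" where "s = (-1) ^ (n - cyc n p)"
  have "pderiv s = 0" by (simp add: s_def pderiv_power pderiv_minus)
  then have "X * pderiv (X ^ c * s) = (X * pderiv (X ^ c)) * s"
    by (simp add: pderiv_mult mult_ac)
  also have "\<dots> = of_nat c * (X ^ c * s)"
    using mult_pderiv_power[of X c] by (simp add: X_def pderiv_pCons of_nat_poly mult_ac)
  finally show ?thesis by (simp add: cpk_cyc_weight_def X_def c_def s_def)
qed

lemma pderiv_sum: "pderiv (sum f A) = (\<Sum>x\<in>A. pderiv (f x))"
  using higher_pderiv_sum[of 1 f A] by simp

lemma cpk_cyc_poly_Suc:
  "cpk_cyc_poly (Suc k)
   = (1 - of_nat k * [:0, 1:]) * cpk_cyc_poly k - 2 * (1 - [:0, 1:]) * ([:0, 1:] * pderiv (cpk_cyc_poly k))"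
proof -
  define X :: "int poly" where "X = [:0, 1:]"
  define w where "w = cpk_cyc_weight"
  let ?perms = "\<lambda>n. {p. p permutes {1..n}}"
  have insertions: "w (Suc k) q + (\<Sum>b\<in>{1..k}. w (Suc k) (transpose (Suc k) b \<circ> q))
      = (1 - of_nat k * X) * w k q - 2 * (1 - X) * (X * pderiv (w k q))" if "q permutes {1..k}" for q
    unfolding w_def X_def X_mult_pderiv_cpk_cyc_weight cpk_cyc_weight_insertions[OF that]
    by (simp add: algebra_simps)
  have "{1..Suc k} = insert (Suc k) {1..k}" by auto
  then have "cpk_cyc_poly (Suc k)
      = (\<Sum>b\<in>insert (Suc k) {1..k}. \<Sum>q\<in>?perms k. w (Suc k) (transpose (Suc k) b \<circ> q))"
    unfolding cpk_cyc_poly_def w_def by (simp add: sum_over_permutations_insert)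
  also have "\<dots> = (\<Sum>q\<in>?perms k. \<Sum>b\<in>insert (Suc k) {1..k}. w (Suc k) (transpose (Suc k) b \<circ> q))"
    by (rule sum.swap)
  also have "\<dots> = (\<Sum>q\<in>?perms k. w (Suc k) q + (\<Sum>b\<in>{1..k}. w (Suc k) (transpose (Suc k) b \<circ> q)))"
    by (simp add: comp_def)
  also have "\<dots> = (\<Sum>q\<in>?perms k. (1 - of_nat k * X) * w k q - 2 * (1 - X) * (X * pderiv (w k q)))"
    using insertions by (intro sum.cong) simp_all
  also have "\<dots> = (1 - of_nat k * X) * cpk_cyc_poly k - 2 * (1 - X) * (X * pderiv (cpk_cyc_poly k))"
    by (simp add: cpk_cyc_poly_def w_def pderiv_sum sum_subtractf sum_distrib_left)
  finally show ?thesis unfolding X_def .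
qed

lemma cpk_cyc_poly_closed_form: "cpk_cyc_poly n = (1 - [:0, 1:]) ^ (n div 2)"
proof (induction n)
  case 0
  have "{p. p permutes {1..0::nat}} = {id}" by (auto simp: permutes_empty)
  then show ?case by (simp add: cpk_cyc_poly_def cpk_cyc_weight_def cpk_def cyc_def)
next
  case (Suc k)
  define X :: "int poly" where "X = [:0, 1:]"
  define m where "m = k div 2"
  have "pderiv (1 - X) = -1" by (simp add: X_def pderiv_diff pderiv_pCons one_pCons minus_pCons)
  then have deriv: "(1 - X) * pderiv ((1 - X) ^ m) = - of_nat m * (1 - X) ^ m"
    using mult_pderiv_power[of "1 - X" m] by (simp add: of_nat_poly)
  have "cpk_cyc_poly (Suc k)
      = (1 - of_nat k * X) * (1 - X) ^ m - 2 * X * ((1 - X) * pderiv ((1 - X) ^ m))"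
    using cpk_cyc_poly_Suc[of k] unfolding Suc.IH X_def[symmetric] m_def[symmetric]
    by (simp add: mult_ac)
  also have "\<dots> = (1 - of_nat k * X + 2 * of_nat m * X) * (1 - X) ^ m"
    unfolding deriv by (simp add: algebra_simps)
  also have "\<dots> = (1 - X) ^ (Suc k div 2)"
  proof (cases "even k")
    case True
    then have "k = 2 * m" "Suc k div 2 = m" unfolding m_def by auto
    then show ?thesis by simp
  next
    case False
    then have "k = 2 * m + 1" "Suc k div 2 = Suc m" unfolding m_def by presburger+
    then show ?thesis by (simp add: algebra_simps)
  qed
  finally show ?case unfolding X_def .
qed

theorem corollary5:
  fixes n :: nat
  assumes "n \<ge> 1"
  shows "(\<Sum>p \<in> {p. p permutes {1..n}}. [:0, 1:] ^ cpk n p * (-1) ^ (n - cyc n p))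
         = ([:1, -1:] :: int poly) ^ (n div 2)"
proof -
  have "[:1, -1:] = 1 - [:0, 1 :: int:]" by (simp add: one_pCons)
  then show ?thesis using cpk_cyc_poly_closed_form[of n] by (simp add: cpk_cyc_poly_def cpk_cyc_weight_def)
qed

end
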